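(* Every connected $3$-regular graph of order at least $8$ has an independent minimum vertex cut.
   Context: All graphs are finite and simple. A vertex cut of a connected graph $G$ is a set $S\subset V(G)$ such that $G-S$ is disconnected. If $G$ has connectivity $k$, a vertex cut $S$ is called minimum if $|S|=k$. A vertex cut $S$ is called an independent vertex cut if $S$ is an independent set of $G$. *)

theory Defs
  imports Main
begin

definition simple_graph :: "'a set \<Rightarrow> ('a \<Rightarrow> 'a \<Rightarrow> bool) \<Rightarrow> bool" where
  "simple_graph V E \<longleftrightarrow> finite V \<and> (\<forall>x y. E x y \<longrightarrow> x \<in> V \<and> y \<in> V)
     \<and> (\<forall>x y. E x y \<longrightarrow> E y x) \<and> (\<forall>x. \<not> E x x)"

definition reach_in :: "('a \<Rightarrow> 'a \<Rightarrow> bool) \<Rightarrow> 'a set \<Rightarrow> 'a \<Rightarrow> 'a \<Rightarrow> bool" where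
  "reach_in E U = (\<lambda>x y. E x y \<and> x \<in> U \<and> y \<in> U)\<^sup>*\<^sup>*"

definition connected_on :: "('a \<Rightarrow> 'a \<Rightarrow> bool) \<Rightarrow> 'a set \<Rightarrow> bool" where
  "connected_on E U \<longleftrightarrow> U \<noteq> {} \<and> (\<forall>x\<in>U. \<forall>y\<in>U. reach_in E U x y)"

definition disconnected_on :: "('a \<Rightarrow> 'a \<Rightarrow> bool) \<Rightarrow> 'a set \<Rightarrow> bool" where
  "disconnected_on E U \<longleftrightarrow> (\<exists>x\<in>U. \<exists>y\<in>U. \<not> reach_in E U x y)"

definition vertex_cut :: "'a set \<Rightarrow> ('a \<Rightarrow> 'a \<Rightarrow> bool) \<Rightarrow> 'a set \<Rightarrow> bool" where
  "vertex_cut V E S \<longleftrightarrow> S \<subseteq> V \<and> disconnected_on E (V - S)"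

definition connectivity :: "'a set \<Rightarrow> ('a \<Rightarrow> 'a \<Rightarrow> bool) \<Rightarrow> nat" where
  "connectivity V E = Min {card S | S. S \<subseteq> V \<and> (disconnected_on E (V - S) \<or> card (V - S) \<le> 1)}"

definition min_vertex_cut :: "'a set \<Rightarrow> ('a \<Rightarrow> 'a \<Rightarrow> bool) \<Rightarrow> 'a set \<Rightarrow> bool" where
  "min_vertex_cut V E S \<longleftrightarrow> vertex_cut V E S \<and> card S = connectivity V E"

definition independent_set :: "('a \<Rightarrow> 'a \<Rightarrow> bool) \<Rightarrow> 'a set \<Rightarrow> bool" where
  "independent_set E S \<longleftrightarrow> (\<forall>x\<in>S. \<forall>y\<in>S. \<not> E x y)"

definition regular :: "'a set \<Rightarrow> ('a \<Rightarrow> 'a \<Rightarrow> bool) \<Rightarrow> nat \<Rightarrow> bool" where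
  "regular V E k \<longleftrightarrow> (\<forall>v\<in>V. card {u. E v u} = k)"

end

theory Submission
  imports Defs
begin

text \<open>
  A neighbourhood is a vertex cut, so the connectivity \<open>k\<close> of a connected cubic graph on at least
  8 vertices is 1, 2 or 3, and for \<open>k = 1\<close> every minimum cut is independent.
  For \<open>k = 2\<close>, let \<open>{x, y}\<close> be a minimum cut with \<open>x\<close> adjacent to \<open>y\<close>. By minimality \<open>x\<close> and \<open>y\<close>
  have a neighbour in each side, so by degree \<open>x\<close> has exactly one neighbour \<open>c\<close> in a side \<open>C\<close>,
  and \<open>{c, y}\<close> separates \<open>C - {c}\<close> from \<open>x\<close>. If \<open>y\<close> were adjacent to \<open>c\<close>, then \<open>{c}\<close> alone would
  separate \<open>C - {c}\<close>; hence \<open>{c, y}\<close> is independent.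
  For \<open>k = 3\<close>, the neighbourhood of a vertex \<open>v\<close> is an independent minimum cut unless \<open>v\<close> lies in
  a triangle \<open>v a b\<close>. With \<open>c\<close>, \<open>a'\<close>, \<open>b'\<close> the third neighbours of \<open>v\<close>, \<open>a\<close>, \<open>b\<close>, the sets
  \<open>{v, a', b'}\<close>, \<open>{a, c, b'}\<close>, \<open>{b, c, a'}\<close> are minimum cuts; if none of them is independent,
  the six vertices span a triangular prism, which then is the whole graph.
\<close>

lemma simple_graphD:
  assumes "simple_graph V E"
  shows "finite V" and "E x y \<Longrightarrow> x \<in> V" and "E x y \<Longrightarrow> y \<in> V"
    and "E x y \<Longrightarrow> E y x" and "\<not> E x x"
  using assms unfolding simple_graph_def by metis+

lemma regularD: "regular V E k \<Longrightarrow> v \<in> V \<Longrightarrow> card {u. E v u} = k"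
  unfolding regular_def by blast

lemma neighbours_eqD: "{u. E v u} = A \<Longrightarrow> E v w \<longleftrightarrow> w \<in> A"
  by blast

lemma reach_in_mem: "reach_in E U x z \<Longrightarrow> x \<in> U \<Longrightarrow> z \<in> U"
  unfolding reach_in_def by (induction rule: rtranclp_induct) auto

definition edge_closed :: "('a \<Rightarrow> 'a \<Rightarrow> bool) \<Rightarrow> 'a set \<Rightarrow> 'a set \<Rightarrow> bool" where
  "edge_closed E X U \<longleftrightarrow> (\<forall>u\<in>X. \<forall>w\<in>U. E u w \<longrightarrow> w \<in> X)"

lemma reach_in_edge_closed:
  assumes "edge_closed E X U" "reach_in E U x z" "x \<in> X"
  shows "z \<in> X"
  using assms(2,3) unfolding reach_in_def
proof (induction rule: rtranclp_induct)
  case (step z w)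
  then show ?case using assms(1) unfolding edge_closed_def by blast
qed

lemma disconnected_onI:
  assumes "edge_closed E X U" "X \<subseteq> U" "x \<in> X" "y \<in> U" "y \<notin> X"
  shows "disconnected_on E U"
  using assms reach_in_edge_closed[OF assms(1) _ assms(3)] unfolding disconnected_on_def by blast

lemma disconnected_onE:
  assumes "disconnected_on E U"
  obtains C where "C \<subseteq> U" "C \<noteq> {}" "U - C \<noteq> {}" "edge_closed E C U"
proof -
  obtain p q where pq: "p \<in> U" "q \<in> U" "\<not> reach_in E U p q"
    using assms unfolding disconnected_on_def by blast
  define C where "C = {z. reach_in E U p z}"
  have "C \<subseteq> U" unfolding C_def using reach_in_mem[OF _ pq(1)] by blast
  moreover have "p \<in> C" unfolding C_def reach_in_def by simp
  moreover have "q \<in> U - C" using pq unfolding C_def by simp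
  moreover have "edge_closed E C U"
    unfolding edge_closed_def
  proof (intro ballI impI)
    fix u w assume "u \<in> C" "w \<in> U" "E u w"
    with \<open>C \<subseteq> U\<close> have "reach_in E U p u" "u \<in> U" unfolding C_def by auto
    with \<open>w \<in> U\<close> \<open>E u w\<close> have "reach_in E U p w"
      unfolding reach_in_def by (simp add: rtranclp.rtrancl_into_rtrancl)
    then show "w \<in> C" unfolding C_def by simp
  qed
  ultimately show ?thesis using that by blast
qed

lemma edge_closed_complement:
  assumes "\<And>x y. E x y \<Longrightarrow> E y x" "edge_closed E C U"
  shows "edge_closed E (U - C) U"
  using assms unfolding edge_closed_def by blast

lemma connected_edge_closed_eq:
  assumes "connected_on E V" "edge_closed E X V" "X \<subseteq> V" "x \<in> X"
  shows "X = V"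
  using assms disconnected_onI[OF assms(2,3,4)]
  unfolding connected_on_def disconnected_on_def by blast

lemma vertex_cutI:
  assumes "S \<subseteq> V" "X \<subseteq> V - S" "edge_closed E X (V - S)" "x \<in> X" "y \<in> V - S" "y \<notin> X"
  shows "vertex_cut V E S"
  unfolding vertex_cut_def using assms disconnected_onI[OF assms(3)] by blast

lemma vertex_cutI_card:
  assumes "finite V" "S \<subseteq> V" "X \<subseteq> V - S" "edge_closed E X (V - S)" "x \<in> X"
    and "card (S \<union> X) < card V"
  shows "vertex_cut V E S"
proof -
  have "S \<union> X \<subseteq> V" using assms(2,3) by blast
  then have "finite (S \<union> X)" using assms(1) by (rule finite_subset)
  have "\<not> V \<subseteq> S \<union> X"
  proof
    assume "V \<subseteq> S \<union> X"
    with \<open>finite (S \<union> X)\<close> have "card V \<le> card (S \<union> X)" by (rule card_mono)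
    with assms(6) show False by linarith
  qed
  then obtain y where "y \<in> V" "y \<notin> S \<union> X" by blast
  then show ?thesis using vertex_cutI[OF assms(2-5)] by blast
qed

lemma connectivity_candidates_finite:
  "finite V \<Longrightarrow> finite {card S | S. S \<subseteq> V \<and> (disconnected_on E (V - S) \<or> card (V - S) \<le> 1)}"
  by (rule finite_subset[of _ "{..card V}"]) (auto intro: card_mono)

lemma connectivity_le_card:
  assumes "finite V" "vertex_cut V E S"
  shows "connectivity V E \<le> card S"
  unfolding connectivity_def
  by (rule Min_le[OF connectivity_candidates_finite[OF assms(1)]])
    (use assms(2) in \<open>auto simp: vertex_cut_def\<close>)

lemma connectivity_attained:
  assumes "finite V"
  obtains S where "S \<subseteq> V" "disconnected_on E (V - S) \<or> card (V - S) \<le> 1"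
    "card S = connectivity V E"
proof -
  define K where "K = {card S | S. S \<subseteq> V \<and> (disconnected_on E (V - S) \<or> card (V - S) \<le> 1)}"
  have "K \<noteq> {}" unfolding K_def by (auto intro!: exI[of _ V])
  have "finite K" unfolding K_def by (rule connectivity_candidates_finite[OF assms])
  from Min_in[OF this \<open>K \<noteq> {}\<close>]
  have "\<exists>S. Min K = card S \<and> S \<subseteq> V \<and> (disconnected_on E (V - S) \<or> card (V - S) \<le> 1)"
    unfolding K_def by (simp only: mem_Collect_eq)
  then obtain S where S: "Min K = card S" "S \<subseteq> V" "disconnected_on E (V - S) \<or> card (V - S) \<le> 1"
    by (elim exE conjE)
  have "connectivity V E = Min K" unfolding connectivity_def K_def by (rule refl)
  with S show ?thesis by (intro that) simp_all
qed

lemma min_vertex_cut_exists: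
  assumes "finite V" "connectivity V E + 2 \<le> card V"
  obtains S where "min_vertex_cut V E S"
proof -
  obtain S where S: "S \<subseteq> V" "disconnected_on E (V - S) \<or> card (V - S) \<le> 1"
    "card S = connectivity V E"
    using connectivity_attained[OF assms(1)] by blast
  have "card (V - S) = card V - card S"
    using S(1) assms(1) by (simp add: card_Diff_subset finite_subset)
  then have "disconnected_on E (V - S)" using S assms(2) by auto
  then show ?thesis using that S unfolding min_vertex_cut_def vertex_cut_def by blast
qed

lemma connectivity_pos:
  assumes "finite V" "connected_on E V" "2 \<le> card V"
  shows "0 < connectivity V E"
proof (rule ccontr)
  assume "\<not> ?thesis"
  then obtain S where "S \<subseteq> V" "disconnected_on E (V - S) \<or> card (V - S) \<le> 1" "card S = 0"
    using connectivity_attained[OF assms(1)] by (metis gr0I)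
  then have "S = {}" using assms(1) finite_subset by fastforce
  then show False
    using \<open>disconnected_on E (V - S) \<or> card (V - S) \<le> 1\<close> assms(2,3)
    unfolding connected_on_def disconnected_on_def by auto
qed

lemma neighbourhood_vertex_cut:
  assumes "simple_graph V E" "v \<in> V" "card {u. E v u} + 1 < card V"
  shows "vertex_cut V E {u. E v u}"
proof (rule vertex_cutI_card[where X = "{v}" and x = v])
  show "card ({u. E v u} \<union> {v}) < card V"
    using card_Un_le[of "{u. E v u}" "{v}"] assms(3) by simp
qed (use assms simple_graphD(1,3,5)[OF assms(1)] in \<open>auto simp: edge_closed_def\<close>)

lemma min_cut_neighbour_in_side:
  assumes "finite V" "\<And>x y. E x y \<Longrightarrow> E y x" "S \<subseteq> V" "s \<in> S" "card S \<le> connectivity V E"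
    and "C \<subseteq> V - S" "C \<noteq> {}" "V - S - C \<noteq> {}" "edge_closed E C (V - S)"
  shows "\<exists>u\<in>C. E s u"
proof (rule ccontr)
  assume "\<not> ?thesis"
  then have "edge_closed E C (V - (S - {s}))"
    using assms(2,9) unfolding edge_closed_def by blast
  moreover obtain c y where "c \<in> C" "y \<in> V - S - C" using assms(7,8) by blast
  ultimately have "vertex_cut V E (S - {s})"
    by (intro vertex_cutI[where x = c and y = y]) (use assms(3,6) in auto)
  then have "connectivity V E \<le> card (S - {s})" by (rule connectivity_le_card[OF assms(1)])
  also have "\<dots> = card S - 1" using assms(4) by simp
  finally have "connectivity V E \<le> card S - 1" .
  moreover have "0 < card S"
    using finite_subset[OF assms(3,1)] assms(4) by (auto simp: card_gt_0_iff)
  ultimately show False using assms(5) by linarith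
qed

lemma card_3_eqI:
  assumes "card A = 3" "a \<in> A" "b \<in> A" "c \<in> A" "a \<noteq> b" "a \<noteq> c" "b \<noteq> c"
  shows "A = {a, b, c}"
  using assms card_subset_eq[of A "{a, b, c}"] card.infinite by fastforce

lemma card_3_obtain_third:
  assumes "card A = 3" "a \<in> A" "b \<in> A" "a \<noteq> b"
  obtains c where "A = {a, b, c}" "c \<noteq> a" "c \<noteq> b"
proof -
  have "card (A - {a, b}) = 1"
    using assms card.infinite by (fastforce simp: card_Diff_subset)
  then obtain c where "A - {a, b} = {c}" using card_1_singletonE by blast
  then show ?thesis using that assms(2,3) by blast
qed

lemma card_3_not_subset_pair:
  assumes "card A = 3"
  shows "\<not> A \<subseteq> {x, y}"
proof
  assume "A \<subseteq> {x, y}"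
  then have "card A \<le> card {x, y}" by (simp add: card_mono)
  also have "\<dots> \<le> 2" by (simp add: card_insert_if)
  finally show False using assms by simp
qed

lemma degree_3_unique_neighbour_in_side:
  assumes "card {u. E x u} = 3" "E x y" "E x c" "E x d" "y \<notin> C" "c \<in> C" "d \<notin> C" "d \<noteq> y"
    and "u \<in> C" "E x u"
  shows "u = c"
proof (rule ccontr)
  assume "u \<noteq> c"
  moreover have "y \<noteq> c" "y \<noteq> u" "c \<noteq> d" "d \<noteq> u" using assms(5-7,9) by auto
  ultimately have "card {y, c, d, u} = 4" using assms(8) by simp
  moreover have "{y, c, d, u} \<subseteq> {u. E x u}" using assms(2-4,10) by blast
  ultimately show False
    using card_mono[of "{u. E x u}" "{y, c, d, u}"] assms(1) card.infinite by fastforce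
qed

lemma edge_closed_remove_attachment:
  assumes "\<And>x y. E x y \<Longrightarrow> E y x" "edge_closed E C (V - S)"
    and "\<And>s u. s \<in> S \<Longrightarrow> s \<notin> T \<Longrightarrow> u \<in> C \<Longrightarrow> E s u \<Longrightarrow> u = c"
  shows "edge_closed E (C - {c}) (V - insert c T)"
  using assms unfolding edge_closed_def by blast

lemma cubic_adjacent_cut_unique_neighbour:
  assumes G: "simple_graph V E" and cubic: "regular V E 3" and k: "connectivity V E = 2"
    and S: "S = {x, y}" "x \<noteq> y" "E x y" "S \<subseteq> V"
    and C: "C \<subseteq> V - S" "C \<noteq> {}" "V - S - C \<noteq> {}" "edge_closed E C (V - S)"
  obtains c where "c \<in> C" "E x c" "\<And>u. u \<in> C \<Longrightarrow> E x u \<Longrightarrow> u = c"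
proof -
  note fin = simple_graphD(1)[OF G] and sym = simple_graphD(4)[OF G]
  have min: "card S \<le> connectivity V E" using S(1,2) k by simp
  have x: "x \<in> S" using S(1) by simp
  obtain c where c: "c \<in> C" "E x c"
    using min_cut_neighbour_in_side[OF fin sym S(4) x min C] by blast
  have "V - S - (V - S - C) \<noteq> {}" "edge_closed E (V - S - C) (V - S)"
    using C(1,2) edge_closed_complement[OF sym C(4)] by auto
  then obtain d where d: "d \<in> V - S - C" "E x d"
    using min_cut_neighbour_in_side[OF fin sym S(4) x min, of "V - S - C"] C(3) by blast
  have "u = c" if "u \<in> C" "E x u" for u
    by (rule degree_3_unique_neighbour_in_side[of E x y c d C, OF regularD[OF cubic] S(3) c(2) d(2)])
      (use that c d C(1) S(1,4) in auto)
  with c show ?thesis using that by blast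
qed

lemma cubic_adjacent_cut_pair:
  assumes G: "simple_graph V E" and cubic: "regular V E 3" and k: "connectivity V E = 2"
    and cut: "vertex_cut V E {x, y}" and "x \<noteq> y" "E x y"
  shows "\<exists>S. min_vertex_cut V E S \<and> independent_set E S"
proof -
  note fin = simple_graphD(1)[OF G] and sym = simple_graphD(4)[OF G]
    and irr = simple_graphD(5)[OF G]
  have xy: "{x, y} \<subseteq> V" using cut by (simp add: vertex_cut_def)
  obtain C where C: "C \<subseteq> V - {x, y}" "C \<noteq> {}" "V - {x, y} - C \<noteq> {}"
    "edge_closed E C (V - {x, y})"
    using cut unfolding vertex_cut_def by (elim conjE disconnected_onE) blast
  obtain c where c: "c \<in> C" "E x c" and x_unique: "\<And>u. u \<in> C \<Longrightarrow> E x u \<Longrightarrow> u = c"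
    using cubic_adjacent_cut_unique_neighbour[OF G cubic k refl \<open>x \<noteq> y\<close> \<open>E x y\<close> xy C] by blast
  obtain c' where y_unique: "\<And>u. u \<in> C \<Longrightarrow> E y u \<Longrightarrow> u = c'"
    using cubic_adjacent_cut_unique_neighbour[OF G cubic k insert_commute _ sym[OF \<open>E x y\<close>] xy C]
      \<open>x \<noteq> y\<close> by blast
  have cV: "c \<in> V" and c_ne: "c \<noteq> x" "c \<noteq> y" using c C(1) by auto
  obtain z where z: "E c z" "z \<notin> {x, y}"
    using card_3_not_subset_pair[OF regularD[OF cubic cV], of x y] by blast
  have "z \<in> C" "z \<noteq> c"
    using z C(4) c(1) simple_graphD(3)[OF G] irr unfolding edge_closed_def by auto
  then have side: "z \<in> C - {c}" "C - {c} \<subseteq> V - {c}" "x \<notin> C - {c}" "y \<notin> C - {c}"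
    using C(1) by auto
  have "c \<noteq> c'"
  proof
    assume "c = c'"
    have closed: "edge_closed E (C - {c}) (V - insert c {})"
    proof (rule edge_closed_remove_attachment[OF sym C(4)])
      fix s u assume "s \<in> {x, y}" "u \<in> C" "E s u"
      then show "u = c" using x_unique[of u] y_unique[of u] \<open>c = c'\<close> by auto
    qed
    have "vertex_cut V E {c}"
      by (rule vertex_cutI[where x = z and y = x, OF _ _ closed]) (use side cV xy c_ne in auto)
    then show False using connectivity_le_card[OF fin] k by fastforce
  qed
  then have "\<not> E y c" using y_unique c(1) by blast
  then have independent: "independent_set E {c, y}"
    unfolding independent_set_def using sym[of c y] irr by auto
  have closed: "edge_closed E (C - {c}) (V - insert c {y})"
  proof (rule edge_closed_remove_attachment[OF sym C(4)])
    fix s u assume "s \<in> {x, y}" "s \<notin> {y}" "u \<in> C" "E s u"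
    then show "u = c" using x_unique[of u] by auto
  qed
  have "vertex_cut V E {c, y}"
    by (rule vertex_cutI[where x = z and y = x, OF _ _ closed])
      (use side cV xy c_ne \<open>x \<noteq> y\<close> in auto)
  then have "min_vertex_cut V E {c, y}"
    using k c_ne unfolding min_vertex_cut_def by simp
  with independent show ?thesis by blast
qed

lemma cubic_connectivity_two_independent_cut:
  assumes G: "simple_graph V E" and cubic: "regular V E 3" and k: "connectivity V E = 2"
    and S: "min_vertex_cut V E S"
  shows "\<exists>S. min_vertex_cut V E S \<and> independent_set E S"
proof -
  obtain x y where xy: "S = {x, y}" "x \<noteq> y"
    using S k unfolding min_vertex_cut_def by (auto simp: card_2_iff)
  show ?thesis
  proof (cases "E x y")
    case True
    with cubic_adjacent_cut_pair[OF G cubic k] S xy show ?thesis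
      unfolding min_vertex_cut_def by blast
  next
    case False
    then have "independent_set E S"
      using xy simple_graphD(4,5)[OF G] unfolding independent_set_def by blast
    with S show ?thesis by blast
  qed
qed

lemma independent_set_three:
  assumes "\<And>x y. E x y \<Longrightarrow> E y x" "\<And>x. \<not> E x x" "\<not> E p q" "\<not> E p r" "\<not> E q r"
  shows "independent_set E {p, q, r}"
  unfolding independent_set_def
  using assms(2-5) assms(1)[of q p] assms(1)[of r p] assms(1)[of r q] by auto

lemma cubic_triangle_neighbourhoods:
  assumes G: "simple_graph V E" and cubic: "regular V E 3" and "E v a" "E v b" "E a b"
  obtains c a' b' where "{u. E v u} = {a, b, c}" "{u. E a u} = {v, b, a'}" "{u. E b u} = {v, a, b'}"
    and "v \<noteq> a" "v \<noteq> b" "a \<noteq> b" "c \<notin> {v, a, b}" "a' \<notin> {v, a, b}" "b' \<notin> {v, a, b}"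
proof -
  note sym = simple_graphD(4)[OF G] and irr = simple_graphD(5)[OF G]
  note deg = regularD[OF cubic]
  have V: "v \<in> V" "a \<in> V" "b \<in> V" using assms(3,4) simple_graphD(2,3)[OF G] by blast+
  have "v \<noteq> a" "v \<noteq> b" "a \<noteq> b" using assms(3-5) irr by metis+
  obtain c where c: "{u. E v u} = {a, b, c}" "c \<noteq> a" "c \<noteq> b"
    by (rule card_3_obtain_third[OF deg[OF V(1)]]) (use assms(3,4) \<open>a \<noteq> b\<close> in auto)
  obtain a' where a': "{u. E a u} = {v, b, a'}" "a' \<noteq> v" "a' \<noteq> b"
    by (rule card_3_obtain_third[OF deg[OF V(2)]])
      (use sym[OF assms(3)] assms(5) \<open>v \<noteq> b\<close> in auto)
  obtain b' where b': "{u. E b u} = {v, a, b'}" "b' \<noteq> v" "b' \<noteq> a"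
    by (rule card_3_obtain_third[OF deg[OF V(3)]])
      (use sym[OF assms(4)] sym[OF assms(5)] \<open>v \<noteq> a\<close> in auto)
  have "c \<noteq> v" "a' \<noteq> a" "b' \<noteq> b"
    using c(1) a'(1) b'(1) irr by (metis insertCI mem_Collect_eq)+
  with c a' b' \<open>v \<noteq> a\<close> \<open>v \<noteq> b\<close> \<open>a \<noteq> b\<close> show ?thesis using that by blast
qed

text \<open>The cut \<open>{c, a', b'}\<close>, which separates the triangle from the rest, shows that the third
  neighbours are distinct.\<close>

lemma triangle_vertex_cuts:
  assumes G: "simple_graph V E" and k: "connectivity V E = 3" and big: "7 \<le> card V"
    and Nv: "{u. E v u} = {a, b, c}" and Na: "{u. E a u} = {v, b, a'}"
    and Nb: "{u. E b u} = {v, a, b'}"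
    and ne: "v \<noteq> a" "v \<noteq> b" "a \<noteq> b" "c \<notin> {v, a, b}" "a' \<notin> {v, a, b}" "b' \<notin> {v, a, b}"
  shows "c \<noteq> a'" "c \<noteq> b'" "a' \<noteq> b'"
    and "vertex_cut V E {v, a', b'}" "vertex_cut V E {a, c, b'}" "vertex_cut V E {b, c, a'}"
proof -
  note fin = simple_graphD(1)[OF G]
  note adj = neighbours_eqD[of E v, OF Nv] neighbours_eqD[of E a, OF Na] neighbours_eqD[of E b, OF Nb]
  have "E v a" "E v b" "E v c" "E a a'" "E b b'" using adj by simp_all
  then have W: "{v, a, b, c, a', b'} \<subseteq> V"
    using simple_graphD(2,3)[OF G] by simp
  have "card {v, a, b, c, a', b'} \<le> 6"
    using card_length[of "[v, a, b, c, a', b']"] by simp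
  then have small: "card {v, a, b, c, a', b'} < card V" using big by linarith
  have cut: "vertex_cut V E S"
    if "S \<subseteq> {v, a, b, c, a', b'}" "X \<subseteq> {v, a, b, c, a', b'}" "X \<subseteq> V - S" "x \<in> X"
      "edge_closed E X (V - S)" for S X x
  proof (rule vertex_cutI_card[OF fin _ that(3) that(5,4)])
    show "S \<subseteq> V" using that(1) W by blast
    have "card (S \<union> X) \<le> card {v, a, b, c, a', b'}" using that(1,2) by (intro card_mono) auto
    then show "card (S \<union> X) < card V" using small by linarith
  qed
  have "vertex_cut V E {c, a', b'}"
    by (rule cut[of _ "{v, a, b}" v]) (use ne W in \<open>auto simp: edge_closed_def adj\<close>)
  then have "3 \<le> card {c, a', b'}" using connectivity_le_card[OF fin] k by metis
  then show dist: "c \<noteq> a'" "c \<noteq> b'" "a' \<noteq> b'" by (auto simp: card_insert_if split: if_splits)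
  show "vertex_cut V E {v, a', b'}"
    by (rule cut[of _ "{a, b}" a]) (use ne W dist in \<open>auto simp: edge_closed_def adj\<close>)
  show "vertex_cut V E {a, c, b'}"
    by (rule cut[of _ "{v, b}" v]) (use ne W dist in \<open>auto simp: edge_closed_def adj\<close>)
  show "vertex_cut V E {b, c, a'}"
    by (rule cut[of _ "{v, a}" v]) (use ne W dist in \<open>auto simp: edge_closed_def adj\<close>)
qed

lemma connected_cubic_prism_card_le:
  assumes G: "simple_graph V E" and conn: "connected_on E V" and cubic: "regular V E 3"
    and Nv: "{u. E v u} = {a, b, c}" and Na: "{u. E a u} = {v, b, a'}"
    and Nb: "{u. E b u} = {v, a, b'}"
    and ne: "v \<noteq> a" "v \<noteq> b" "a \<noteq> b" "c \<notin> {v, a, b}" "a' \<notin> {v, a, b}" "b' \<notin> {v, a, b}"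
    and dist: "c \<noteq> a'" "c \<noteq> b'" "a' \<noteq> b'"
    and edges: "E a' b'" "E c b'" "E c a'"
  shows "card V \<le> 6"
proof -
  note sym = simple_graphD(4)[OF G] and deg = regularD[OF cubic]
  note adj = neighbours_eqD[of E v, OF Nv] neighbours_eqD[of E a, OF Na] neighbours_eqD[of E b, OF Nb]
  have "E v a" "E v b" "E v c" "E a a'" "E b b'" using adj by simp_all
  then have W: "{v, a, b, c, a', b'} \<subseteq> V"
    using simple_graphD(2,3)[OF G] by simp
  have Nc: "{u. E c u} = {v, a', b'}"
    by (rule card_3_eqI[OF deg]) (use edges sym[OF \<open>E v c\<close>] ne dist W in auto)
  have Na': "{u. E a' u} = {a, c, b'}"
    by (rule card_3_eqI[OF deg]) (use edges sym[OF \<open>E a a'\<close>] sym[of c a'] ne dist W in auto)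
  have Nb': "{u. E b' u} = {b, c, a'}"
    by (rule card_3_eqI[OF deg])
      (use edges sym[OF \<open>E b b'\<close>] sym[of c b'] sym[of a' b'] ne dist W in auto)
  have "edge_closed E {v, a, b, c, a', b'} V"
    using adj neighbours_eqD[of E c, OF Nc] neighbours_eqD[of E a', OF Na'] neighbours_eqD[of E b', OF Nb']
    unfolding edge_closed_def by auto
  then have "{v, a, b, c, a', b'} = V"
    by (rule connected_edge_closed_eq[where x = v, OF conn _ W]) simp
  then show ?thesis using card_length[of "[v, a, b, c, a', b']"] by simp
qed

lemma cubic_triangle_independent_cut:
  assumes G: "simple_graph V E" and conn: "connected_on E V" and cubic: "regular V E 3"
    and k: "connectivity V E = 3" and big: "7 \<le> card V"
    and "E v a" "E v b" "E a b"
  shows "\<exists>S. min_vertex_cut V E S \<and> independent_set E S"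
proof -
  note sym = simple_graphD(4)[OF G] and irr = simple_graphD(5)[OF G]
  obtain c a' b' where Nv: "{u. E v u} = {a, b, c}" and Na: "{u. E a u} = {v, b, a'}"
    and Nb: "{u. E b u} = {v, a, b'}"
    and ne: "v \<noteq> a" "v \<noteq> b" "a \<noteq> b" "c \<notin> {v, a, b}" "a' \<notin> {v, a, b}" "b' \<notin> {v, a, b}"
    using cubic_triangle_neighbourhoods[OF G cubic assms(6-8)] by blast
  note cuts = triangle_vertex_cuts[OF G k big Nv Na Nb ne]
  note adj = neighbours_eqD[of E v, OF Nv] neighbours_eqD[of E a, OF Na] neighbours_eqD[of E b, OF Nb]
  have independent_cut: "\<exists>S. min_vertex_cut V E S \<and> independent_set E S"
    if "vertex_cut V E {p, q, r}" "p \<noteq> q" "p \<noteq> r" "q \<noteq> r" "\<not> E p q" "\<not> E p r" "\<not> E q r"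
    for p q r
    using that(1-4) k independent_set_three[OF sym irr that(5-7)]
    unfolding min_vertex_cut_def by auto
  consider "\<not> E a' b'" | "\<not> E c b'" | "\<not> E c a'" | "E a' b'" "E c b'" "E c a'" by blast
  then show ?thesis
  proof cases
    case 1
    then show ?thesis
      by (rule independent_cut[OF cuts(4), rotated -1]) (use ne cuts(1-3) in \<open>auto simp: adj\<close>)
  next
    case 2
    then show ?thesis
      by (rule independent_cut[OF cuts(5), rotated -1]) (use ne cuts(1-3) in \<open>auto simp: adj\<close>)
  next
    case 3
    then show ?thesis
      by (rule independent_cut[OF cuts(6), rotated -1]) (use ne cuts(1-3) in \<open>auto simp: adj\<close>)
  next
    case 4
    with connected_cubic_prism_card_le[OF G conn cubic Nv Na Nb ne cuts(1-3)] big show ?thesis by simp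
  qed
qed

lemma cubic_connectivity_three_independent_cut:
  assumes G: "simple_graph V E" and conn: "connected_on E V" and cubic: "regular V E 3"
    and k: "connectivity V E = 3" and big: "7 \<le> card V" and "v \<in> V"
  shows "\<exists>S. min_vertex_cut V E S \<and> independent_set E S"
proof (cases "\<exists>a b. E v a \<and> E v b \<and> E a b")
  case True
  then show ?thesis using cubic_triangle_independent_cut[OF G conn cubic k big] by blast
next
  case False
  have "card {u. E v u} = 3" using regularD[OF cubic \<open>v \<in> V\<close>] .
  then have "min_vertex_cut V E {u. E v u}"
    using neighbourhood_vertex_cut[OF G \<open>v \<in> V\<close>] big k unfolding min_vertex_cut_def by simp
  moreover have "independent_set E {u. E v u}"
    using False unfolding independent_set_def by blast
  ultimately show ?thesis by blast
qed

theorem lemma6: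
  fixes V :: "'a set" and E :: "'a \<Rightarrow> 'a \<Rightarrow> bool"
  assumes "simple_graph V E"
    and "connected_on E V"
    and "regular V E 3"
    and "card V \<ge> 8"
  shows "\<exists>S. min_vertex_cut V E S \<and> independent_set E S"
proof -
  note fin = simple_graphD(1)[OF assms(1)] and irr = simple_graphD(5)[OF assms(1)]
  obtain v where v: "v \<in> V" using assms(2) unfolding connected_on_def by blast
  have "card {u. E v u} = 3" using regularD[OF assms(3) v] .
  then have le3: "connectivity V E \<le> 3"
    using connectivity_le_card[OF fin neighbourhood_vertex_cut[OF assms(1) v]] assms(4) by simp
  then have "connectivity V E + 2 \<le> card V" using assms(4) by linarith
  then obtain S where S: "min_vertex_cut V E S" by (rule min_vertex_cut_exists[OF fin])
  have "0 < connectivity V E" using connectivity_pos[OF fin assms(2)] assms(4) by simp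
  with le3 consider "card S = 1" | "card S = 2" | "connectivity V E = 3"
    using S unfolding min_vertex_cut_def by linarith
  then show ?thesis
  proof cases
    case 1
    then obtain s where "S = {s}" by (rule card_1_singletonE)
    then show ?thesis using S irr unfolding independent_set_def by blast
  next
    case 2
    then show ?thesis
      using cubic_connectivity_two_independent_cut[OF assms(1,3) _ S] S
      unfolding min_vertex_cut_def by simp
  next
    case 3
    then show ?thesis
      using cubic_connectivity_three_independent_cut[OF assms(1-3) _ _ v] assms(4) by simp
  qed
qed

end
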